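(* Let $a_{max}\ge 1$, $U_0\ge 0$, $T>0$ and $t_0\ge 0$. Then there exist reals $t_0<t_1<t_2<\cdots$ and, for each $k\ge 0$, a real $s_k$ with $t_k\le s_k$ and $s_k+T\le t_{k+1}$, such that for every affine map $\varphi(s)=as+b$ with $0<a\le a_{max}$, $1/a\le a_{max}$ and $|b|\le a_{max}U_0$, and every $k\ge0$, one has $\varphi([s_k,s_k+T))\subseteq[t_k,t_{k+1})$.
   Context: Interpretation: the protocol stages are assigned adjacent intervals $[t_k,t_{k+1})$ of local clock time. A node $i$ transmits a message of size $W$ (via a MAC code guaranteeing delivery within a delay $T=T_{MAC}(W)$) during the local-time window $[s_k,s_k+T)$ of its own clock. For two good nodes $i,j$, node $j$'s clock reading as a function of node $i$'s reading $s$ is $\tau^j_i(s)=a_{ji}s+b_{ji}$, where all relative skews satisfy $0<a_{ij}\le a_{max}$ (for both orders, so $a_{ji}=1/a_{ij}\ge 1/a_{max}$) and $|b_{ji}|\le a_{max}U_0$; $\varphi$ plays the role of $\tau^j_i$. The conclusion says the message is received during the same interval as measured by node $j$'s clock. *)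

theory Defs
  imports "HOL-Analysis.Analysis"
begin

end

theory Submission
  imports Defs
begin

text \<open>Within a stage starting at \<open>t\<close>, start the transmission window at \<open>s = A (t + B)\<close>,
  where \<open>A\<close> bounds the skews and \<open>B\<close> the offsets: even the slowest admissible clock with the
  most negative offset then reads at least \<open>t\<close>. End the stage at \<open>A (s + T) + B\<close>, beyond what
  the fastest clock with the most positive offset can read before the window closes.\<close>

definition window_start :: "real \<Rightarrow> real \<Rightarrow> real \<Rightarrow> real" where
  "window_start A B t = A * (t + B)"

definition next_stage :: "real \<Rightarrow> real \<Rightarrow> real \<Rightarrow> real \<Rightarrow> real" where
  "next_stage A B T t = A * (window_start A B t + T) + B"

fun stage_start :: "real \<Rightarrow> real \<Rightarrow> real \<Rightarrow> real \<Rightarrow> nat \<Rightarrow> real" where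
  "stage_start A B T t0 0 = t0"
| "stage_start A B T t0 (Suc k) = next_stage A B T (stage_start A B T t0 k)"

lemma affine_image_window_subset_stage:
  fixes a b A B T t :: real
  assumes "0 < a" "a \<le> A" "1 \<le> a * A" "\<bar>b\<bar> \<le> B" "0 \<le> t + B" "0 \<le> T"
  shows "(\<lambda>x. a * x + b) ` {window_start A B t..<window_start A B t + T}
           \<subseteq> {t..<next_stage A B T t}"
proof
  fix y assume "y \<in> (\<lambda>x. a * x + b) ` {window_start A B t..<window_start A B t + T}"
  then obtain x where x: "A * (t + B) \<le> x" "x < A * (t + B) + T" and y: "y = a * x + b"
    by (auto simp: window_start_def)
  have "t + B \<le> (a * A) * (t + B)"
    using assms(3,5) mult_right_mono[of 1 "a * A" "t + B"] by simp
  also have "\<dots> \<le> a * x"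
    using x(1) assms(1) by (simp add: mult.assoc)
  finally have "t \<le> y"
    using y assms(4) by (simp add: abs_le_iff)
  have "0 \<le> A * (t + B) + T"
    using assms by (simp add: order_trans[OF _ assms(2)])
  then have "a * x < A * (A * (t + B) + T)"
    using x(2) assms(1,2) by (meson mult_right_mono mult_strict_left_mono order.strict_trans2)
  then have "y < next_stage A B T t"
    using y assms(4) by (simp add: next_stage_def window_start_def abs_le_iff)
  with \<open>t \<le> y\<close> show "y \<in> {t..<next_stage A B T t}" by simp
qed

lemma window_within_stage:
  fixes A B T t :: real
  assumes "1 \<le> A" "0 \<le> B" "0 \<le> T" "0 \<le> t"
  shows "t \<le> window_start A B t" and "window_start A B t + T \<le> next_stage A B T t"
proof -
  show "t \<le> window_start A B t"
    using assms mult_right_mono[of 1 A "t + B"] by (simp add: window_start_def)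
  moreover have "window_start A B t + T \<le> A * (window_start A B t + T)"
    using assms calculation mult_right_mono[of 1 A "window_start A B t + T"] by simp
  ultimately show "window_start A B t + T \<le> next_stage A B T t"
    using assms(2) by (simp add: next_stage_def)
qed

lemma stage_start_nonneg:
  assumes "1 \<le> A" "0 \<le> B" "0 \<le> T" "0 \<le> t0"
  shows "0 \<le> stage_start A B T t0 k"
proof (induction k)
  case 0
  then show ?case using assms(4) by simp
next
  case (Suc k)
  then show ?case
    using window_within_stage[OF assms(1-3) Suc] assms(3) by simp
qed

theorem lemma6:
  fixes a_max U0 T t0 :: real
  assumes "a_max \<ge> 1" and "U0 \<ge> 0" and "T > 0" and "t0 \<ge> 0"
  shows "\<exists>t s :: nat \<Rightarrow> real. t 0 = t0 \<and> strict_mono t \<and>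
    (\<forall>k. t k \<le> s k \<and> s k + T \<le> t (Suc k)) \<and>
    (\<forall>a b :: real. 0 < a \<and> a \<le> a_max \<and> 1 / a \<le> a_max \<and> \<bar>b\<bar> \<le> a_max * U0 \<longrightarrow>
       (\<forall>k. (\<lambda>x. a * x + b) ` {s k..<s k + T} \<subseteq> {t k..<t (Suc k)}))"
proof -
  define B where "B = a_max * U0"
  define t where "t = stage_start a_max B T t0"
  define s where "s = (\<lambda>k. window_start a_max B (t k))"
  have B: "0 \<le> B" using assms(1,2) by (simp add: B_def)
  have t_nonneg: "0 \<le> t k" for k
    using stage_start_nonneg[OF assms(1) B _ assms(4)] assms(3) by (simp add: t_def)
  have window: "t k \<le> s k \<and> s k + T \<le> t (Suc k)" for k
    using window_within_stage[OF assms(1) B _ t_nonneg, of T k] assms(3) by (simp add: s_def t_def)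
  have "t k < t (Suc k)" for k
    using window[of k] assms(3) by linarith
  then have "strict_mono t"
    by (simp add: strict_mono_Suc_iff)
  moreover have "(\<lambda>x. a * x + b) ` {s k..<s k + T} \<subseteq> {t k..<t (Suc k)}"
    if "0 < a" "a \<le> a_max" "1 / a \<le> a_max" "\<bar>b\<bar> \<le> B" for a b k
    using affine_image_window_subset_stage[of a a_max b B "t k" T] that t_nonneg[of k] B assms(3)
    by (simp add: s_def t_def divide_le_eq mult.commute)
  ultimately show ?thesis
    using window by (intro exI[of _ t] exI[of _ s]) (simp add: t_def B_def)
qed

end
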